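(* Let $m\ge2$, $G=CK(2m-1)$, and let $B$ be a blocker for the simple Hamiltonian paths of $G$ whose $m$ edges are parallel (or equal) to the boundary edges $[0,1],\dots,[m-1,m]$, one per direction. Let $[\alpha,\alpha+1]$ and $[m-\delta-1,m-\delta]$ be the first and last edges of $\langle0,1,\dots,m\rangle$ belonging to $B$. Let $[i,j],[k,l]\in B$ with $\alpha<i<k<m-\delta$ and $j,l\notin\{\alpha,\alpha+1,\dots,m-\delta\}$. Then: (1) the edges $[i,j]$ and $[k,l]$ do not cross, i.e., the points $i,k,l,j$ appear in this order on the boundary of the convex hull of $V(G)$; (2) $k-i$ is smaller than the distance between $l$ and $j$.
   Context: $CK(2m-1)$ is the complete convex geometric graph on $2m-1$ points in convex position, labelled clockwise $0,\dots,2m-2$ (elements of $\mathbb{Z}_{2m-1}$), with all segments as edges; boundary edges are $[i,i+1]$. The direction of $[i,j]$ is $i+j\pmod{2m-1}$; edges are parallel if they have the same direction. The distance between vertices $x,y$ is $\min(|x-y|,(2m-1)-|x-y|)$. A simple Hamiltonian path (SHP) is a path through all vertices whose edges pairwise do not cross; a blocker for SHPs is an edge set of smallest possible size sharing an edge with every SHP. *)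

theory Defs
  imports Main
begin

text \<open>Vertices of CK(n) are 0,...,n-1 (clockwise); edges are 2-element sets.\<close>

definition cedges :: "nat \<Rightarrow> nat set set" where
  "cedges n = {{a, b} | a b. a < n \<and> b < n \<and> a \<noteq> b}"

definition edir :: "nat \<Rightarrow> nat set \<Rightarrow> nat" where
  "edir n e = (\<Sum>x\<in>e. x) mod n"

definition between :: "nat \<Rightarrow> nat \<Rightarrow> nat \<Rightarrow> bool" where
  "between a b x = (min a b < x \<and> x < max a b)"

text \<open>Segments [a,b] and [c,d] between points in convex position cross
  iff their endpoints are distinct and interleave.\<close>
definition crosses :: "nat \<Rightarrow> nat \<Rightarrow> nat \<Rightarrow> nat \<Rightarrow> bool" where
  "crosses a b c d = (distinct [a, b, c, d] \<and> (between a b c \<noteq> between a b d))"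

definition is_SHP :: "nat \<Rightarrow> nat list \<Rightarrow> bool" where
  "is_SHP n ps = (distinct ps \<and> set ps = {0..<n} \<and>
     (\<forall>a b. a < b \<and> b + 1 < length ps \<longrightarrow>
        \<not> crosses (ps ! a) (ps ! (a + 1)) (ps ! b) (ps ! (b + 1))))"

definition path_edges :: "nat list \<Rightarrow> nat set set" where
  "path_edges ps = {{ps ! a, ps ! (a + 1)} | a. a + 1 < length ps}"

definition meets_all_SHP :: "nat \<Rightarrow> nat set set \<Rightarrow> bool" where
  "meets_all_SHP n B = (\<forall>ps. is_SHP n ps \<longrightarrow> B \<inter> path_edges ps \<noteq> {})"

definition is_blocker :: "nat \<Rightarrow> nat set set \<Rightarrow> bool" where
  "is_blocker n B = (B \<subseteq> cedges n \<and> meets_all_SHP n B \<and>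
     (\<forall>B'. B' \<subseteq> cedges n \<and> meets_all_SHP n B' \<longrightarrow> card B \<le> card B'))"

definition cdist :: "nat \<Rightarrow> nat \<Rightarrow> nat \<Rightarrow> nat" where
  "cdist n x y = (let d = (if x \<le> y then y - x else x - y) in min d (n - d))"

end

theory Submission
  imports Defs
begin

text \<open>Lift the vertices of \<open>CK(n)\<close> to integers, so that a lifted edge \<open>{x, y}\<close> has direction
  \<open>(x + y) mod n\<close>.  A walk in \<open>\<int>\<close> that extends the interval of visited points by one at
  either end at every step projects to a simple Hamiltonian path.  The zigzag walks among
  them use only edges with two consecutive sums inside an interval \<open>[a, b]\<close>, boundary edges
  along \<open>[b, p]\<close>, and edges with two consecutive sums around \<open>[a, p]\<close>.  Since \<open>n\<close> is odd and \<open>B\<close>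
  has exactly one edge of each direction \<open>0, 1, 3, \<dots>, n - 2\<close>, an edge of \<open>B\<close> is excluded
  either by the parity of its sum or because its direction is already taken by a known edge
  of \<open>B\<close>; boundary edges outside \<open>[\<alpha>, \<beta> + 1]\<close> are excluded by the choice of \<open>\<alpha>\<close> and \<open>\<beta>\<close>.
  Choosing \<open>a, b, p\<close> from \<open>[i, j]\<close> and \<open>[k, l]\<close> so that the whole zigzag path avoids \<open>B\<close> shows
  that for lifts \<open>J, L\<close> of \<open>j, l\<close> beyond \<open>\<beta> + 1\<close> the sums satisfy \<open>k + L < i + J\<close>.  Hence
  \<open>i < k < L < J < i + n\<close>, which gives both claims.\<close>

definition vtx :: "nat \<Rightarrow> int \<Rightarrow> nat" where
  "vtx n z = nat (z mod int n)"

lemma vtx_of_nat [simp]: "u < n \<Longrightarrow> vtx n (int u) = u"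
  unfolding vtx_def by simp

lemma vtx_of_nat_plus1 [simp]: "u + 1 < n \<Longrightarrow> vtx n (int u + 1) = u + 1"
  using vtx_of_nat[of "u + 1" n] by (simp add: add.commute)

lemma vtx_add_mult [simp]: "vtx n (z + c * int n) = vtx n z"
  unfolding vtx_def by simp

lemma vtx_less: "0 < n \<Longrightarrow> vtx n z < n"
  unfolding vtx_def by (simp add: nat_less_iff)

lemma int_vtx: "0 < n \<Longrightarrow> int (vtx n z) = z mod int n"
  unfolding vtx_def by simp

lemma vtx_eq_imp_eq:
  assumes "vtx n x = vtx n y" "\<bar>x - y\<bar> < int n"
  shows "x = y"
proof -
  have "0 < n" using assms(2) by linarith
  then have "x mod int n = y mod int n"
    using assms(1) int_vtx by metis
  then obtain q where q: "x - y = int n * q"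
    by (metis dvdE mod_eq_dvd_iff)
  have "q = 0"
  proof (rule ccontr)
    assume "q \<noteq> 0"
    then have "int n * 1 \<le> int n * \<bar>q\<bar>" by (intro mult_left_mono) auto
    then have "int n \<le> \<bar>int n * q\<bar>" by (simp add: abs_mult)
    then show False using q assms(2) by simp
  qed
  then show ?thesis using q by simp
qed

lemma vtx_neq:
  assumes "x \<noteq> y + c * int n" "\<bar>x - (y + c * int n)\<bar> < int n"
  shows "vtx n y \<noteq> vtx n x"
  using vtx_eq_imp_eq[of n x "y + c * int n"] assms by auto

lemma vtx_add_mod:
  assumes "0 < n"
  shows "(vtx n x + vtx n y) mod n = nat ((x + y) mod int n)"
proof -
  have "int ((vtx n x + vtx n y) mod n) = (x mod int n + y mod int n) mod int n"
    using assms by (simp add: zmod_int int_vtx)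
  also have "\<dots> = (x + y) mod int n" by (simp add: mod_add_eq)
  finally show ?thesis by simp
qed

definition ibetween :: "int \<Rightarrow> int \<Rightarrow> int \<Rightarrow> bool" where
  "ibetween a b x \<longleftrightarrow> min a b < x \<and> x < max a b"

definition icrosses :: "int \<Rightarrow> int \<Rightarrow> int \<Rightarrow> int \<Rightarrow> bool" where
  "icrosses a b c d \<longleftrightarrow> distinct [a, b, c, d] \<and> (ibetween a b c \<noteq> ibetween a b d)"

lemma crosses_iff_icrosses:
  "crosses a b c d \<longleftrightarrow> icrosses (int a) (int b) (int c) (int d)"
  unfolding crosses_def between_def icrosses_def ibetween_def by auto

lemma icrosses_translate:
  "icrosses (a + t) (b + t) (c + t) (d + t) \<longleftrightarrow> icrosses a b c d"
  unfolding icrosses_def ibetween_def by auto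

lemma icrosses_mod_window:
  fixes a b c d r n :: int
  assumes "0 \<le> r" "r < n"
    and "a \<in> {r..<r + n}" "b \<in> {r..<r + n}" "c \<in> {r..<r + n}" "d \<in> {r..<r + n}"
  shows "icrosses (a mod n) (b mod n) (c mod n) (d mod n) \<longleftrightarrow> icrosses a b c d"
proof -
  have reduce: "(z < n \<longrightarrow> z mod n = z) \<and> (\<not> z < n \<longrightarrow> z mod n = z - n)" if "z \<in> {r..<r + n}" for z
  proof (cases "z < n")
    case False
    have "z mod n = (z - n) mod n" by (simp add: mod_diff_right_eq[symmetric])
    also have "\<dots> = z - n" using False that assms(1,2) by (intro mod_pos_pos_trivial) auto
    finally show ?thesis using False by simp
  qed (use that assms(1) in simp)
  have betw: "ibetween u v z \<longleftrightarrow> (u < z \<and> z < v) \<or> (v < z \<and> z < u)" for u v z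
    unfolding ibetween_def by auto
  have "icrosses a' b' c' d' \<longleftrightarrow> icrosses a b c d"
    if "a' = a mod n" "b' = b mod n" "c' = c mod n" "d' = d mod n" for a' b' c' d'
    unfolding icrosses_def betw distinct.simps set_simps insert_iff empty_iff
    using reduce[OF assms(3)] reduce[OF assms(4)] reduce[OF assms(5)] reduce[OF assms(6)]
      assms(1,2) assms(3-6)[unfolded atLeastLessThan_iff]
    unfolding that[symmetric] by smt
  then show ?thesis by blast
qed

lemma crosses_vtx_window:
  assumes "0 < n" and "x \<in> {w..<w + int n}" "y \<in> {w..<w + int n}" "z \<in> {w..<w + int n}" "u \<in> {w..<w + int n}"
  shows "crosses (vtx n x) (vtx n y) (vtx n z) (vtx n u) \<longleftrightarrow> icrosses x y z u"
proof -
  define r where "r = w mod int n"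
  define t where "t = r - w"
  have "t mod int n = 0" unfolding t_def r_def by (simp add: mod_diff_left_eq)
  then have shift: "(v + t) mod int n = v mod int n" for v
    by (metis add.right_neutral mod_add_right_eq)
  have r: "0 \<le> r" "r < int n" unfolding r_def using assms(1) by auto
  have win: "v + t \<in> {r..<r + int n}" if "v \<in> {w..<w + int n}" for v
    using that unfolding t_def by auto
  have "crosses (vtx n x) (vtx n y) (vtx n z) (vtx n u)
      \<longleftrightarrow> icrosses ((x + t) mod int n) ((y + t) mod int n) ((z + t) mod int n) ((u + t) mod int n)"
    unfolding crosses_iff_icrosses shift using assms(1) by (simp add: int_vtx)
  also have "\<dots> \<longleftrightarrow> icrosses (x + t) (y + t) (z + t) (u + t)"
    using icrosses_mod_window[OF r win win win win] assms(2-5) by blast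
  finally show ?thesis by (simp add: icrosses_translate)
qed

text \<open>\<open>[lo r, hi r]\<close> is the interval filled by \<open>f 0, \<dots>, f r\<close>.  Projected to \<open>CK(n)\<close>, every new
  edge joins the visited arc to a neighbour of the arc, so it cannot cross an earlier edge.\<close>

definition growing :: "nat \<Rightarrow> (nat \<Rightarrow> int) \<Rightarrow> (nat \<Rightarrow> int) \<Rightarrow> (nat \<Rightarrow> int) \<Rightarrow> bool" where
  "growing n f lo hi \<longleftrightarrow> f 0 = lo 0 \<and> hi 0 = lo 0 \<and>
     (\<forall>r. Suc r < n \<longrightarrow>
        (f (Suc r) = lo r - 1 \<and> lo (Suc r) = lo r - 1 \<and> hi (Suc r) = hi r) \<or>
        (f (Suc r) = hi r + 1 \<and> hi (Suc r) = hi r + 1 \<and> lo (Suc r) = lo r))"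

lemma growing_uminus:
  "growing n f lo hi \<Longrightarrow> growing n (\<lambda>r. - f r) (\<lambda>r. - hi r) (\<lambda>r. - lo r)"
  unfolding growing_def by auto

lemma growing_image:
  assumes "growing n f lo hi" "r < n"
  shows "f ` {..r} = {lo r..hi r} \<and> hi r - lo r = int r \<and> (f r = lo r \<or> f r = hi r)"
  using assms(2)
proof (induction r)
  case 0
  then show ?case using assms(1) unfolding growing_def by auto
next
  case (Suc r)
  then have IH: "f ` {..r} = {lo r..hi r}" "hi r - lo r = int r" by auto
  have atMost_Suc: "{..Suc r} = insert (Suc r) {..r}" by auto
  from assms(1) Suc.prems consider
      "f (Suc r) = lo r - 1" "lo (Suc r) = lo r - 1" "hi (Suc r) = hi r"
    | "f (Suc r) = hi r + 1" "hi (Suc r) = hi r + 1" "lo (Suc r) = lo r"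
    unfolding growing_def by blast
  then show ?case
  proof cases
    case 1
    have "f ` {..Suc r} = insert (lo r - 1) {lo r..hi r}" using atMost_Suc IH 1 by simp
    also have "\<dots> = {lo r - 1..hi r}" using IH by auto
    finally show ?thesis using 1 IH by simp
  next
    case 2
    have "f ` {..Suc r} = insert (hi r + 1) {lo r..hi r}" using atMost_Suc IH 2 by simp
    also have "\<dots> = {lo r..hi r + 1}" using IH by auto
    finally show ?thesis using 2 IH by simp
  qed
qed

lemma growing_in_interval:
  assumes "growing n f lo hi" "q \<le> r" "r < n"
  shows "f q \<in> {lo r..hi r}"
  using growing_image[OF assms(1,3)] assms(2) by auto

lemma growing_fresh:
  assumes "growing n f lo hi" "q < r" "r < n"
  shows "f r \<notin> {lo q..hi q}"
  using assms(2,3)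
proof (induction r)
  case (Suc r)
  have "{lo q..hi q} = f ` {..q}" using growing_image[OF assms(1), of q] Suc.prems by simp
  also have "\<dots> \<subseteq> f ` {..r}" using Suc.prems by (intro image_mono) auto
  also have "\<dots> = {lo r..hi r}" using growing_image[OF assms(1), of r] Suc.prems by simp
  finally have "{lo q..hi q} \<subseteq> {lo r..hi r}" .
  moreover have "f (Suc r) \<notin> {lo r..hi r}"
    using assms(1) Suc.prems unfolding growing_def by auto
  ultimately show ?case by auto
qed simp

lemma growing_inj:
  assumes "growing n f lo hi" "q < n" "r < n" "f q = f r"
  shows "q = r"
  using growing_fresh[OF assms(1), of q r] growing_fresh[OF assms(1), of r q]
    growing_in_interval[OF assms(1), of q q] growing_in_interval[OF assms(1), of r r] assms(2-4)
  by (metis linorder_neqE_nat order_refl)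

lemma growing_SHP:
  assumes grow: "growing n f lo hi" and "0 < n"
  shows "is_SHP n (map (\<lambda>r. vtx n (f r)) [0..<n])"
proof -
  define w where "w = lo (n - 1)"
  have window: "f r \<in> {w..<w + int n}" if "r < n" for r
  proof -
    have "f r \<in> {lo (n - 1)..hi (n - 1)}" using growing_in_interval[OF grow, of r "n - 1"] that by simp
    then show ?thesis using growing_image[OF grow, of "n - 1"] \<open>0 < n\<close> unfolding w_def by auto
  qed
  have vtx_inj: "q = r" if "q < n" "r < n" "vtx n (f q) = vtx n (f r)" for q r
  proof -
    have "f q = f r"
      using vtx_eq_imp_eq[OF that(3)] window[OF that(1)] window[OF that(2)] by auto
    then show ?thesis using growing_inj[OF grow that(1,2)] by blast
  qed
  have distinct: "distinct (map (\<lambda>r. vtx n (f r)) [0..<n])"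
    unfolding distinct_map using vtx_inj by (auto simp: inj_on_def)
  moreover have "set (map (\<lambda>r. vtx n (f r)) [0..<n]) = {0..<n}"
  proof (rule card_subset_eq)
    show "set (map (\<lambda>r. vtx n (f r)) [0..<n]) \<subseteq> {0..<n}" using vtx_less[OF \<open>0 < n\<close>] by auto
  qed (use distinct_card[OF distinct] in auto)
  moreover have "\<not> crosses (vtx n (f a)) (vtx n (f (a + 1))) (vtx n (f b)) (vtx n (f (b + 1)))"
    if "a < b" "b + 1 < n" for a b
  proof -
    have "f a \<in> {lo b..hi b}" "f (a + 1) \<in> {lo b..hi b}" "f b = lo b \<or> f b = hi b"
      using growing_in_interval[OF grow] growing_image[OF grow, of b] that by auto
    moreover have "f (b + 1) \<notin> {lo b..hi b}" using growing_fresh[OF grow, of b "b + 1"] that by simp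
    ultimately have "\<not> icrosses (f a) (f (a + 1)) (f b) (f (b + 1))"
      unfolding icrosses_def ibetween_def by auto
    moreover have "a < n" "a + 1 < n" "b < n" using that by auto
    ultimately show ?thesis
      using crosses_vtx_window[OF \<open>0 < n\<close> window window window window] that by blast
  qed
  ultimately show ?thesis unfolding is_SHP_def by (simp add: nth_map_upt)
qed

lemma SHP_edge_in_blocker:
  assumes "meets_all_SHP n B" "is_SHP n (map g [0..<n])"
  obtains r where "Suc r < n" "{g r, g (Suc r)} \<in> B"
  using assms unfolding meets_all_SHP_def path_edges_def by fastforce

text \<open>With \<open>b = a + N1 - 1\<close> and \<open>p = b + N2\<close>, the zigzag path visits \<open>[a, b]\<close> alternating
  between its two halves from the midpoint outwards and arriving at \<open>b\<close>, then walks
  \<open>b + 1, \<dots>, p\<close>, and finally alternates \<open>a - 1, p + 1, a - 2, p + 2, \<dots>\<close>.\<close>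

definition zigzag :: "int \<Rightarrow> nat \<Rightarrow> nat \<Rightarrow> nat \<Rightarrow> int" where
  "zigzag a N1 N2 r =
    (if r < N1 then
       (if even (N1 - 1 - r) then a + int N1 - 1 - int ((N1 - 1 - r) div 2)
        else a + int ((N1 - 1 - r) div 2))
     else if r < N1 + N2 then a + int r
     else if even (r - N1 - N2) then a - 1 - int ((r - N1 - N2) div 2)
     else a + int (N1 + N2) + int ((r - N1 - N2) div 2))"

definition zigzag_lo :: "int \<Rightarrow> nat \<Rightarrow> nat \<Rightarrow> nat \<Rightarrow> int" where
  "zigzag_lo a N1 N2 r =
    (if r < N1 then a + int ((N1 - 1 - r) div 2)
     else if r < N1 + N2 then a
     else a - int ((r - N1 - N2 + 2) div 2))"

definition zigzag_hi :: "int \<Rightarrow> nat \<Rightarrow> nat \<Rightarrow> nat \<Rightarrow> int" where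
  "zigzag_hi a N1 N2 r =
    (if r < N1 then a + int N1 - 1 - int ((N1 - r) div 2)
     else if r < N1 + N2 then a + int r
     else a + int (N1 + N2) - 1 + int ((r - N1 - N2 + 1) div 2))"

lemma half_parity_facts:
  fixes q :: nat
  shows "even q \<Longrightarrow> 1 \<le> q \<Longrightarrow> (q - 1) div 2 = q div 2 - 1 \<and> odd (q - 1) \<and> (q + 1) div 2 = q div 2 \<and> 1 \<le> q div 2"
    and "odd q \<Longrightarrow> (q - 1) div 2 = q div 2 \<and> even (q - 1) \<and> (q + 1) div 2 = q div 2 + 1"
    and "even q \<Longrightarrow> (q + 2) div 2 = q div 2 + 1 \<and> odd (q + 1) \<and> (q + 1 + 1) div 2 = q div 2 + 1 \<and> (q + 1) div 2 = q div 2"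
    and "odd q \<Longrightarrow> (q + 2) div 2 = q div 2 + 1 \<and> even (q + 1) \<and> (q + 1 + 1) div 2 = q div 2 + 1 \<and> (q + 1) div 2 = q div 2 + 1 \<and> (q + 1 + 2) div 2 = q div 2 + 2"
  by presburger+

lemma zigzag_growing:
  assumes "1 \<le> N1"
  shows "growing n (zigzag a N1 N2) (zigzag_lo a N1 N2) (zigzag_hi a N1 N2)"
  unfolding growing_def
proof (intro conjI allI impI)
  show "zigzag a N1 N2 0 = zigzag_lo a N1 N2 0" "zigzag_hi a N1 N2 0 = zigzag_lo a N1 N2 0"
    unfolding zigzag_def zigzag_lo_def zigzag_hi_def using assms by (simp; presburger)+
next
  fix r
  let ?f = "zigzag a N1 N2" and ?lo = "zigzag_lo a N1 N2" and ?hi = "zigzag_hi a N1 N2"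
  note defs = zigzag_def zigzag_lo_def zigzag_hi_def
  show "(?f (Suc r) = ?lo r - 1 \<and> ?lo (Suc r) = ?lo r - 1 \<and> ?hi (Suc r) = ?hi r) \<or>
        (?f (Suc r) = ?hi r + 1 \<and> ?hi (Suc r) = ?hi r + 1 \<and> ?lo (Suc r) = ?lo r)"
  proof -
    consider "Suc r < N1" | "Suc r = N1" | "N1 < Suc r" "Suc r \<le> N1 + N2" | "N1 + N2 < Suc r"
      by linarith
    then show ?thesis
    proof cases
      case 1
      define q where "q = N1 - 1 - r"
      have q: "1 \<le> q" "N1 - 1 - Suc r = q - 1" "N1 - Suc r = q" "N1 - r = q + 1" "r < N1"
        using 1 unfolding q_def by auto
      show ?thesis
      proof (cases "even q")
        case True
        then show ?thesis unfolding defs using 1 q half_parity_facts(1)[OF True q(1)] q_def[symmetric] by simp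
      next
        case False
        then show ?thesis unfolding defs using 1 q half_parity_facts(2)[OF False] q_def[symmetric] by simp
      qed
    next
      case 2
      then show ?thesis unfolding defs by (cases "N2 = 0") auto
    next
      case 3
      then show ?thesis unfolding defs by (cases "Suc r = N1 + N2") auto
    next
      case 4
      define q where "q = r - N1 - N2"
      have q: "Suc r - N1 - N2 = q + 1" "Suc r - N1 - N2 + 2 = q + 1 + 2" "Suc r - N1 - N2 + 1 = q + 1 + 1"
        using 4 unfolding q_def by auto
      show ?thesis
      proof (cases "even q")
        case True
        then show ?thesis unfolding defs using 4 q half_parity_facts(3)[OF True] q_def[symmetric] by simp
      next
        case False
        then show ?thesis unfolding defs using 4 q half_parity_facts(4)[OF False] q_def[symmetric] by simp
      qed
    qed
  qed
qed

lemma zigzag_edge: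
  fixes a b p :: int and N1 N2 r :: nat
  assumes N1: "1 \<le> N1" and b: "b = a + int N1 - 1" and p: "p = b + int N2"
  defines "x \<equiv> zigzag a N1 N2 r" and "y \<equiv> zigzag a N1 N2 (Suc r)"
  shows "(x \<in> {a..b} \<and> y \<in> {a..b} \<and> (x + y = a + b \<or> x + y = a + b - 1)) \<or>
    (b \<le> x \<and> x < p \<and> y = x + 1) \<or>
    ((x < a \<and> p \<le> y \<or> y < a \<and> p \<le> x) \<and> (x + y = a + p - 1 \<or> x + y = a + p))"
proof -
  consider "Suc r < N1" | "Suc r = N1" | "N1 < Suc r" "Suc r \<le> N1 + N2" | "N1 + N2 < Suc r"
    by linarith
  then show ?thesis
  proof cases
    case 1
    define q where "q = N1 - 1 - r"
    have q: "1 \<le> q" "N1 - 1 - Suc r = q - 1" "q \<le> N1 - 1" "r < N1"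
      using 1 unfolding q_def by auto
    show ?thesis
    proof (cases "even q")
      case True
      note half = half_parity_facts(1)[OF True q(1)]
      have "x = b - int (q div 2)" unfolding x_def zigzag_def using q True q_def[symmetric] b by simp
      moreover have "y = a + int (q div 2) - 1"
        unfolding y_def zigzag_def using 1 q half True q_def[symmetric] by simp
      moreover have "q div 2 \<le> N1 - 1" using q by linarith
      ultimately have "x \<in> {a..b} \<and> y \<in> {a..b} \<and> x + y = a + b - 1" using half b by auto
      then show ?thesis by blast
    next
      case False
      note half = half_parity_facts(2)[OF False]
      have "x = a + int (q div 2)" unfolding x_def zigzag_def using q False q_def[symmetric] by simp
      moreover have "y = b - int (q div 2)"
        unfolding y_def zigzag_def using 1 q half False q_def[symmetric] b by simp
      moreover have "q div 2 \<le> N1 - 1" "q div 2 < q" using q by linarith+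
      ultimately have "x \<in> {a..b} \<and> y \<in> {a..b} \<and> x + y = a + b" using half b N1 by auto
      then show ?thesis by blast
    qed
  next
    case 2
    then show ?thesis unfolding x_def y_def zigzag_def using b p by (cases "N2 = 0") auto
  next
    case 3
    then show ?thesis unfolding x_def y_def zigzag_def using b p by (cases "Suc r = N1 + N2") auto
  next
    case 4
    define q where "q = r - N1 - N2"
    have q: "Suc r - N1 - N2 = q + 1" using 4 unfolding q_def by auto
    show ?thesis
    proof (cases "even q")
      case True
      then show ?thesis
        unfolding x_def y_def zigzag_def using 4 q half_parity_facts(3)[OF True] q_def[symmetric] b p by simp
    next
      case False
      then show ?thesis
        unfolding x_def y_def zigzag_def using 4 q half_parity_facts(4)[OF False] q_def[symmetric] b p by simp
    qed
  qed
qed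

lemma zigzag_SHP:
  assumes "0 < n" "1 \<le> N1" "s = 1 \<or> s = -1"
  shows "is_SHP n (map (\<lambda>r. vtx n (s * zigzag a N1 N2 r)) [0..<n])"
  using growing_SHP[OF zigzag_growing[OF assms(2)] assms(1)]
    growing_SHP[OF growing_uminus[OF zigzag_growing[OF assms(2)]] assms(1)] assms(3)
  by auto

lemma zigzag_step_less:
  assumes "1 \<le> N1" "Suc r < n"
  shows "\<bar>zigzag a N1 N2 (Suc r) - zigzag a N1 N2 r\<bar> < int n"
proof -
  note grow = zigzag_growing[OF assms(1), of n a N2]
  have "zigzag a N1 N2 r \<in> {zigzag_lo a N1 N2 (n - 1)..zigzag_hi a N1 N2 (n - 1)}"
    "zigzag a N1 N2 (Suc r) \<in> {zigzag_lo a N1 N2 (n - 1)..zigzag_hi a N1 N2 (n - 1)}"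
    using growing_in_interval[OF grow] assms(2) by auto
  moreover have "zigzag_hi a N1 N2 (n - 1) - zigzag_lo a N1 N2 (n - 1) = int (n - 1)"
    using growing_image[OF grow, of "n - 1"] assms(2) by simp
  ultimately show ?thesis using assms(2) by auto
qed

lemma zigzag_edge_in_blocker_signed:
  fixes a b p s :: int
  assumes "meets_all_SHP n B" "0 < n" "a \<le> b" "b \<le> p" "s = 1 \<or> s = -1"
  obtains (inner) x y where "{vtx n (s * x), vtx n (s * y)} \<in> B" "x \<in> {a..b}" "y \<in> {a..b}"
      "x + y = a + b \<or> x + y = a + b - 1"
    | (walk) x where "{vtx n (s * x), vtx n (s * (x + 1))} \<in> B" "b \<le> x" "x < p"
    | (outer) x y where "{vtx n (s * x), vtx n (s * y)} \<in> B" "x < a" "p \<le> y" "y - x < int n"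
      "x + y = a + p - 1 \<or> x + y = a + p"
proof -
  define N1 N2 where "N1 = nat (b - a + 1)" and "N2 = nat (p - b)"
  have N: "1 \<le> N1" "b = a + int N1 - 1" "p = b + int N2"
    using assms(3,4) unfolding N1_def N2_def by auto
  obtain r where r: "Suc r < n"
    "{vtx n (s * zigzag a N1 N2 r), vtx n (s * zigzag a N1 N2 (Suc r))} \<in> B"
    using SHP_edge_in_blocker[OF assms(1) zigzag_SHP[OF assms(2) N(1) assms(5)]] by blast
  define x y where "x = zigzag a N1 N2 r" and "y = zigzag a N1 N2 (Suc r)"
  have xyB: "{vtx n (s * x), vtx n (s * y)} \<in> B" "{vtx n (s * y), vtx n (s * x)} \<in> B"
    using r(2) unfolding x_def y_def by (auto simp: insert_commute)
  have "\<bar>y - x\<bar> < int n" using zigzag_step_less[OF N(1) r(1)] unfolding x_def y_def .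
  then show thesis
    using zigzag_edge[OF N, of r, folded x_def y_def] xyB inner[of x y] walk[of x] outer[of x y] outer[of y x]
    by (auto simp: add.commute)
qed

lemma zigzag_edge_in_blocker:
  fixes a b p :: int
  assumes "meets_all_SHP n B" "0 < n" "a \<le> b" "b \<le> p"
  obtains (inner) x y where "{vtx n x, vtx n y} \<in> B" "x \<in> {a..b}" "y \<in> {a..b}"
      "x + y = a + b \<or> x + y = a + b - 1"
    | (walk) x where "{vtx n x, vtx n (x + 1)} \<in> B" "b \<le> x" "x < p"
    | (outer) x y where "{vtx n x, vtx n y} \<in> B" "x < a" "p \<le> y" "y - x < int n"
      "x + y = a + p - 1 \<or> x + y = a + p"
  by (rule zigzag_edge_in_blocker_signed[OF assms, of 1]) (use that in auto)

lemma zigzag_edge_in_blocker_mirror: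
  fixes a b q :: int
  assumes "meets_all_SHP n B" "0 < n" "a \<le> b" "q \<le> a"
  obtains (inner) x y where "{vtx n x, vtx n y} \<in> B" "x \<in> {a..b}" "y \<in> {a..b}"
      "x + y = a + b \<or> x + y = a + b + 1"
    | (walk) x where "{vtx n x, vtx n (x + 1)} \<in> B" "q \<le> x" "x < a"
    | (outer) x y where "{vtx n x, vtx n y} \<in> B" "b < x" "y \<le> q" "x - y < int n"
      "x + y = b + q \<or> x + y = b + q + 1"
proof (rule zigzag_edge_in_blocker_signed[OF assms(1,2), of "-b" "-a" "-q" "-1"])
  fix x y :: int
  assume "{vtx n (- 1 * x), vtx n (- 1 * y)} \<in> B" "x \<in> {- b..- a}" "y \<in> {- b..- a}"
    "x + y = - b + - a \<or> x + y = - b + - a - 1"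
  then show thesis using inner[of "-x" "-y"] by auto
next
  fix x :: int
  assume "{vtx n (- 1 * x), vtx n (- 1 * (x + 1))} \<in> B" "- a \<le> x" "x < - q"
  then show thesis using walk[of "-x - 1"] by (auto simp: insert_commute)
next
  fix x y :: int
  assume "{vtx n (- 1 * x), vtx n (- 1 * y)} \<in> B" "x < - b" "- q \<le> y" "y - x < int n"
    "x + y = - b + - q - 1 \<or> x + y = - b + - q"
  then show thesis using outer[of "-x" "-y"] by auto
qed (use assms in auto)

text \<open>\<open>[\<alpha>, \<alpha> + 1]\<close> and \<open>[\<beta>, \<beta> + 1]\<close> are the first and last edges of \<open>\<langle>0, 1, \<dots>, m\<rangle>\<close> in \<open>B\<close>
  (so \<open>\<beta> = m - \<delta> - 1\<close> in the notation of the statement).\<close>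

locale boundary_parallel_blocker =
  fixes m n \<alpha> \<beta> :: nat and B :: "nat set set"
  assumes m: "2 \<le> m" and n: "n = 2 * m - 1"
    and blocker: "is_blocker n B" and card_B: "card B = m"
    and directions: "\<forall>t<m. \<exists>!e. e \<in> B \<and> edir n e = (2 * t + 1) mod n"
    and first_edge: "\<alpha> < m" "{\<alpha>, \<alpha> + 1} \<in> B" and before_first: "\<forall>t<\<alpha>. {t, t + 1} \<notin> B"
    and last_edge: "\<beta> < m" "{\<beta>, \<beta> + 1} \<in> B" and after_last: "\<forall>t. \<beta> < t \<and> t < m \<longrightarrow> {t, t + 1} \<notin> B"
    and first_before_last: "\<alpha> < \<beta>"
begin

lemma n_pos: "0 < n"
  using m n by simp

lemma last_edge_room: "2 * int \<beta> + 1 \<le> int n"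
  using last_edge(1) first_before_last n by simp

lemma meets: "meets_all_SHP n B"
  using blocker unfolding is_blocker_def by simp

lemma B_edge: "{u, v} \<in> B \<Longrightarrow> u \<noteq> v \<and> u < n \<and> v < n"
  using blocker unfolding is_blocker_def cedges_def by (auto simp: doubleton_eq_iff)

lemma direction_mod: "t < m \<Longrightarrow> (2 * t + 1) mod n = (if t = m - 1 then 0 else 2 * t + 1)"
proof (cases "t = m - 1")
  case True
  then have "2 * t + 1 = n" using m n by simp
  then show ?thesis using True by simp
qed (use m n in simp)

text \<open>There are \<open>m\<close> prescribed directions and only \<open>m\<close> edges, so every edge of \<open>B\<close> has one of them.\<close>

lemma B_direction:
  assumes "e \<in> B"
  shows "\<exists>t<m. edir n e = (2 * t + 1) mod n"
proof -
  define E where "E t = (THE e. e \<in> B \<and> edir n e = (2 * t + 1) mod n)" for t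
  have E: "E t \<in> B \<and> edir n (E t) = (2 * t + 1) mod n" if "t < m" for t
    unfolding E_def using theI'[of "\<lambda>e. e \<in> B \<and> edir n e = (2 * t + 1) mod n"] directions that by blast
  have "inj_on E {..<m}"
  proof (rule inj_onI)
    fix t t' assume "t \<in> {..<m}" "t' \<in> {..<m}" "E t = E t'"
    then show "t = t'" using E[of t] E[of t'] direction_mod[of t] direction_mod[of t'] m n
      by (auto split: if_splits)
  qed
  moreover have "finite B" using card_B m by (intro card_ge_0_finite) simp
  ultimately have "E ` {..<m} = B"
    using card_subset_eq[of B "E ` {..<m}"] E card_B by (auto simp: card_image)
  then show ?thesis using assms E by force
qed

lemma B_direction_inj: "e \<in> B \<Longrightarrow> e' \<in> B \<Longrightarrow> edir n e = edir n e' \<Longrightarrow> e = e'"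
  using B_direction directions by metis

lemma edir_vtx: "vtx n x \<noteq> vtx n y \<Longrightarrow> edir n {vtx n x, vtx n y} = nat ((x + y) mod int n)"
  unfolding edir_def using vtx_add_mod[OF n_pos] by simp

text \<open>\<open>n\<close> is odd and the directions of \<open>B\<close> are \<open>0\<close> and the odd residues.\<close>

lemma B_sum_parity:
  assumes "{vtx n x, vtx n y} \<in> B" "(x + y) mod int n = s mod int n" "0 < s" "s < 2 * int n"
  shows "odd s \<longleftrightarrow> s \<le> int n"
proof -
  obtain t where t: "t < m" "edir n {vtx n x, vtx n y} = (2 * t + 1) mod n"
    using B_direction[OF assms(1)] by blast
  have "vtx n x \<noteq> vtx n y" using B_edge[OF assms(1)] by simp
  then have dir: "s mod int n = int ((2 * t + 1) mod n)"
    using edir_vtx t(2) assms(2) n_pos by (metis int_nat_eq pos_mod_sign of_nat_0_less_iff)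
  show ?thesis
  proof (cases "s < int n")
    case True
    then show ?thesis using dir direction_mod[OF t(1)] assms(3) by (auto split: if_splits)
  next
    case False
    have "s mod int n = (s - int n) mod int n" by (simp add: mod_diff_right_eq[symmetric])
    also have "\<dots> = s - int n" using False assms(4) by (intro mod_pos_pos_trivial) auto
    finally have "s = int ((2 * t + 1) mod n) + int n" using dir by simp
    then have "s = int n \<or> s = 2 * (int t + int m)" using direction_mod[OF t(1)] n m
      by (auto split: if_splits)
    then show ?thesis using False n m by auto
  qed
qed

lemma even_sum_not_in_B:
  assumes "x + y = s + c * int n" "0 < s" "s < int n" "even s"
  shows "{vtx n x, vtx n y} \<notin> B"
  using B_sum_parity[of x y s] assms by auto

lemma same_sum_not_in_B:
  assumes "{vtx n u, vtx n v} \<in> B" "x + y = u + v + c * int n"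
    "vtx n u \<noteq> vtx n x" "vtx n u \<noteq> vtx n y"
  shows "{vtx n x, vtx n y} \<notin> B"
proof
  assume xy: "{vtx n x, vtx n y} \<in> B"
  have "vtx n x \<noteq> vtx n y" "vtx n u \<noteq> vtx n v" using B_edge xy assms(1) by auto
  then have "edir n {vtx n x, vtx n y} = edir n {vtx n u, vtx n v}" using edir_vtx assms(2) by simp
  then show False using B_direction_inj[OF xy assms(1)] assms(3,4) by (auto simp: doubleton_eq_iff)
qed

lemma first_edge_lift: "{vtx n (int \<alpha>), vtx n (int \<alpha> + 1)} \<in> B"
proof -
  have "\<alpha> + 1 < n" using first_before_last last_edge(1) n by simp
  then show ?thesis using first_edge(2) by simp
qed

lemma last_edge_lift: "{vtx n (int \<beta>), vtx n (int \<beta> + 1)} \<in> B"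
proof -
  have "\<beta> + 1 < n" using last_edge(1) first_before_last n by simp
  then show ?thesis using last_edge(2) by simp
qed

lemma boundary_edge_not_in_B:
  assumes "int \<beta> < x" "x < int \<alpha> + int n"
  shows "{vtx n x, vtx n (x + 1)} \<notin> B"
proof -
  consider "x < int m" | "int m \<le> x" "x < int n" | "int n \<le> x" by linarith
  then show ?thesis
  proof cases
    case 1
    define t where "t = nat x"
    have "x = int t" "\<beta> < t" "t < m" "t + 1 < n" using 1 assms(1) m n unfolding t_def by auto
    then show ?thesis using after_last by simp
  next
    case 2
    then show ?thesis using even_sum_not_in_B[of x "x + 1" "2 * x + 1 - int n" 1] n m by auto
  next
    case 3
    define t where "t = nat (x - int n)"
    have "x = int t + int n" "t < \<alpha>" "t + 1 < n" using 3 assms(2) first_edge(1) m n unfolding t_def by auto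
    then have "vtx n x = t" "vtx n (x + 1) = t + 1"
      using vtx_add_mult[of n "int t" 1] vtx_add_mult[of n "int t + 1" 1] vtx_of_nat[of "t + 1" n]
      by (simp_all add: add_ac)
    then show ?thesis using before_first \<open>t < \<alpha>\<close> by simp
  qed
qed

text \<open>Moving the sum of an edge of \<open>B\<close> by one away from \<open>n\<close> gives an even nonzero direction.\<close>

lemma next_sum_not_in_B:
  assumes uv: "{vtx n u, vtx n v} \<in> B" and "1 < u + v" "u + v < 2 * int n"
    and xy: "x + y = (if u + v \<le> int n then u + v - 1 else u + v + 1) + c * int n"
  shows "{vtx n x, vtx n y} \<notin> B"
proof (cases "u + v \<le> int n")
  case True
  then have "odd (u + v)" using B_sum_parity[OF uv refl] assms(2,3) by simp
  then show ?thesis using even_sum_not_in_B[of x y "u + v - 1" c] xy True assms(2) by auto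
next
  case False
  then have "even (u + v)" using B_sum_parity[OF uv refl] assms(2,3) by simp
  moreover have "odd n" using n m by simp
  moreover have "u + v \<noteq> 2 * int n - 1" using \<open>even (u + v)\<close> by presburger
  ultimately show ?thesis
    using even_sum_not_in_B[of x y "u + v + 1 - int n" "c + 1"] xy False assms(3)
    by (auto simp: algebra_simps)
qed

lemma lift_sum_le:
  assumes uU: "{vtx n u, vtx n U} \<in> B" and u: "int \<alpha> < u" "u \<le> int \<beta>"
    and U: "int \<beta> + 2 \<le> U" "U < int \<alpha> + int n"
  shows "u + U \<le> 2 * int \<alpha> + int n"
proof (rule ccontr)
  assume "\<not> ?thesis"
  then have S: "2 * int \<alpha> + int n < u + U" by simp
  \<comment> \<open>inner sums \<open>\<equiv> 2\<alpha> + 2\<close> (even) and \<open>2\<alpha> + 1\<close> (taken by \<open>[\<alpha>, \<alpha> + 1]\<close>),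
    outer sums \<open>u + U\<close> and the next one\<close>
  define b where "b = 2 * int \<alpha> + 2 + int n - u"
  have path: "u \<le> b" "b \<le> U + 1" using S u U last_edge_room unfolding b_def by auto
  show False
  proof (cases rule: zigzag_edge_in_blocker[OF meets n_pos path, case_names inner walk outer])
    case (inner x y)
    from inner(4) show False
    proof
      assume "x + y = u + b"
      then show False
        using even_sum_not_in_B[of x y "2 * int \<alpha> + 2" 1] inner(1) last_edge_room first_before_last
        unfolding b_def by auto
    next
      assume "x + y = u + b - 1"
      moreover have "vtx n (int \<alpha> + 1) \<noteq> vtx n x" "vtx n (int \<alpha> + 1) \<noteq> vtx n y"
        using vtx_neq[of x "int \<alpha> + 1" 0 n] vtx_neq[of y "int \<alpha> + 1" 0 n] inner(2,3) S U
        unfolding b_def by (auto simp: abs_less_iff)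
      ultimately show False
        using same_sum_not_in_B[of "int \<alpha> + 1" "int \<alpha>" x y 1] first_edge_lift inner(1)
        unfolding b_def by (auto simp: insert_commute)
    qed
  next
    case (walk x)
    then show False using boundary_edge_not_in_B[of x] U u last_edge_room unfolding b_def by auto
  next
    case (outer x y)
    from outer(5) show False
    proof
      assume "x + y = u + (U + 1) - 1"
      moreover have "vtx n u \<noteq> vtx n x" "vtx n u \<noteq> vtx n y"
        using vtx_neq[of x u 0 n] vtx_neq[of y u 1 n] outer(2-5) u U by (auto simp: abs_less_iff)
      ultimately show False using same_sum_not_in_B[OF uU, of x y 0] outer(1) by auto
    next
      assume "x + y = u + (U + 1)"
      then show False
        using next_sum_not_in_B[OF uU, of x y 0] outer S u U last_edge_room by auto
    qed
  qed
qed

lemma lift_sum_ge: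
  assumes uU: "{vtx n u, vtx n U} \<in> B" and u: "int \<alpha> < u" "u \<le> int \<beta>"
    and U: "int \<beta> + 2 \<le> U" "U < int \<alpha> + int n"
  shows "2 * int \<beta> + 2 \<le> u + U"
proof (rule ccontr)
  assume "\<not> ?thesis"
  then have S: "u + U \<le> 2 * int \<beta> + 1" by simp
  \<comment> \<open>inner sums \<open>\<equiv> 2\<beta>\<close> (even) and \<open>2\<beta> + 1\<close> (taken by \<open>[\<beta>, \<beta> + 1]\<close>),
    outer sums \<open>\<equiv> u + U\<close> and the one before\<close>
  have path: "2 * int \<beta> - u \<le> u + int n" "U - 1 \<le> 2 * int \<beta> - u"
    using S u last_edge_room by auto
  show False
  proof (cases rule: zigzag_edge_in_blocker_mirror[OF meets n_pos path, case_names inner walk outer])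
    case (inner x y)
    from inner(4) show False
    proof
      assume "x + y = 2 * int \<beta> - u + (u + int n)"
      then show False
        using even_sum_not_in_B[of x y "2 * int \<beta>" 1] inner(1) first_before_last last_edge_room by auto
    next
      assume "x + y = 2 * int \<beta> - u + (u + int n) + 1"
      moreover have "vtx n (int \<beta>) \<noteq> vtx n x" "vtx n (int \<beta>) \<noteq> vtx n y"
        using vtx_neq[of x "int \<beta>" 1 n] vtx_neq[of y "int \<beta>" 1 n] inner(2,3) S U
        by (auto simp: abs_less_iff)
      ultimately show False
        using same_sum_not_in_B[OF last_edge_lift, of x y 1] inner(1) by auto
    qed
  next
    case (walk x)
    then show False using boundary_edge_not_in_B[of x] U u last_edge_room by auto
  next
    case (outer x y)
    from outer(5) show False
    proof
      assume "x + y = u + int n + (U - 1)"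
      then show False
        using next_sum_not_in_B[OF uU, of x y 1] outer(1) S u U last_edge_room by auto
    next
      assume "x + y = u + int n + (U - 1) + 1"
      moreover have "vtx n u \<noteq> vtx n x" "vtx n u \<noteq> vtx n y"
        using vtx_neq[of x u 2 n] vtx_neq[of y u 1 n] outer(2-4) u U by (auto simp: abs_less_iff)
      ultimately show False using same_sum_not_in_B[OF uU, of x y 1] outer(1) by auto
    qed
  qed
qed

lemma lift_sum_order_low:
  assumes iJ: "{vtx n i, vtx n J} \<in> B" and kL: "{vtx n k, vtx n L} \<in> B"
    and ik: "int \<alpha> < i" "i < k" "k \<le> int \<beta>"
    and J: "int \<beta> + 2 \<le> J" "J < int \<alpha> + int n" and L: "int \<beta> + 2 \<le> L" "L < int \<alpha> + int n"
    and low: "i + J \<le> int n"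
  shows "k + L \<le> i + J"
proof (rule ccontr)
  assume "\<not> ?thesis"
  then have less: "i + J < k + L" by simp
  have iJ_ge: "2 * int \<beta> + 2 \<le> i + J" using lift_sum_ge[OF iJ] ik J by simp
  have kL_le: "k + L \<le> 2 * int \<alpha> + int n" using lift_sum_le[OF kL] ik L by simp
  \<comment> \<open>inner sums \<open>i + J\<close> and the one before, outer sums \<open>k + L\<close> and its neighbour away from \<open>n\<close>\<close>
  define p where "p = (if k + L \<le> int n then k + L - i - 1 else k + L - i)"
  have path: "i + 1 \<le> J - 1" "J - 1 \<le> p" using ik J less unfolding p_def by auto
  show False
  proof (cases rule: zigzag_edge_in_blocker[OF meets n_pos path, case_names inner walk outer])
    case (inner x y)
    from inner(4) show False
    proof
      assume "x + y = i + 1 + (J - 1)"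
      moreover have "vtx n i \<noteq> vtx n x" "vtx n i \<noteq> vtx n y"
        using vtx_neq[of x i 1 n] vtx_neq[of y i 1 n] inner(2,3) ik J by (auto simp: abs_less_iff)
      ultimately show False using same_sum_not_in_B[OF iJ, of x y 0] inner(1) by auto
    next
      assume "x + y = i + 1 + (J - 1) - 1"
      then show False
        using next_sum_not_in_B[OF iJ, of x y 0] inner(1) low iJ_ge last_edge_room by auto
    qed
  next
    case (walk x)
    then show False
      using boundary_edge_not_in_B[of x] J ik kL_le unfolding p_def by (auto split: if_splits)
  next
    case (outer x y)
    have "x + y = k + L \<or> x + y = (if k + L \<le> int n then k + L - 1 else k + L + 1)"
      using outer(5) unfolding p_def by auto
    then show False
    proof
      assume "x + y = k + L"
      moreover have "vtx n k \<noteq> vtx n x" "vtx n k \<noteq> vtx n y"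
        using vtx_neq[of x k 0 n] vtx_neq[of y k 1 n] outer(2-4) ik L unfolding p_def
        by (auto simp: abs_less_iff split: if_splits)
      ultimately show False using same_sum_not_in_B[OF kL, of x y 0] outer(1) by auto
    next
      assume "x + y = (if k + L \<le> int n then k + L - 1 else k + L + 1)"
      then show False
        using next_sum_not_in_B[OF kL, of x y 0] outer(1) ik L kL_le last_edge_room by auto
    qed
  qed
qed

lemma lift_sum_order_high:
  assumes iJ: "{vtx n i, vtx n J} \<in> B" and kL: "{vtx n k, vtx n L} \<in> B"
    and ik: "int \<alpha> < i" "i < k" "k \<le> int \<beta>"
    and J: "int \<beta> + 2 \<le> J" "J < int \<alpha> + int n" and L: "int \<beta> + 2 \<le> L" "L < int \<alpha> + int n"
    and high: "int n < i + J"
  shows "k + L \<le> i + J"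
proof (rule ccontr)
  assume "\<not> ?thesis"
  then have less: "i + J < k + L" by simp
  have iJ_le: "i + J \<le> 2 * int \<alpha> + int n" using lift_sum_le[OF iJ] ik J by simp
  have kL_le: "k + L \<le> 2 * int \<alpha> + int n" using lift_sum_le[OF kL] ik L by simp
  \<comment> \<open>inner sums \<open>\<equiv> k + L\<close> and the next one, outer sums \<open>\<equiv> i + J\<close> and the next one\<close>
  have path: "L + 1 \<le> k + int n - 1" "i + J - k + 1 \<le> L + 1" using ik L less by auto
  show False
  proof (cases rule: zigzag_edge_in_blocker_mirror[OF meets n_pos path, case_names inner walk outer])
    case (inner x y)
    from inner(4) show False
    proof
      assume "x + y = L + 1 + (k + int n - 1)"
      moreover have "vtx n k \<noteq> vtx n x" "vtx n k \<noteq> vtx n y"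
        using vtx_neq[of x k 1 n] vtx_neq[of y k 1 n] inner(2,3) ik L by (auto simp: abs_less_iff)
      ultimately show False using same_sum_not_in_B[OF kL, of x y 1] inner(1) by auto
    next
      assume "x + y = L + 1 + (k + int n - 1) + 1"
      then show False
        using next_sum_not_in_B[OF kL, of x y 1] inner(1) high less kL_le last_edge_room first_before_last
        by auto
    qed
  next
    case (walk x)
    then show False using boundary_edge_not_in_B[of x] L ik high last_edge_room by auto
  next
    case (outer x y)
    from outer(5) show False
    proof
      assume "x + y = k + int n - 1 + (i + J - k + 1)"
      moreover have "vtx n i \<noteq> vtx n x" "vtx n i \<noteq> vtx n y"
        using vtx_neq[of x i 2 n] vtx_neq[of y i 1 n] outer(2-4) ik J by (auto simp: abs_less_iff)
      ultimately show False using same_sum_not_in_B[OF iJ, of x y 1] outer(1) by auto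
    next
      assume "x + y = k + int n - 1 + (i + J - k + 1) + 1"
      then show False
        using next_sum_not_in_B[OF iJ, of x y 1] outer(1) high iJ_le last_edge_room first_before_last
        by auto
    qed
  qed
qed

lemma lift_sum_decreasing:
  assumes iJ: "{vtx n i, vtx n J} \<in> B" and kL: "{vtx n k, vtx n L} \<in> B"
    and ik: "int \<alpha> < i" "i < k" "k \<le> int \<beta>"
    and J: "int \<beta> + 2 \<le> J" "J < int \<alpha> + int n" and L: "int \<beta> + 2 \<le> L" "L < int \<alpha> + int n"
  shows "k + L < i + J"
proof -
  have "vtx n i \<noteq> vtx n k" "vtx n i \<noteq> vtx n L"
    using vtx_neq[of k i 0 n] vtx_neq[of L i 0 n] ik L by (auto simp: abs_less_iff)
  then have "k + L \<noteq> i + J" using same_sum_not_in_B[OF iJ, of k L 0] kL by auto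
  moreover have "k + L \<le> i + J"
    using lift_sum_order_low[OF assms] lift_sum_order_high[OF assms] by linarith
  ultimately show ?thesis by simp
qed

end

lemma vtx_lift_outside:
  fixes v \<alpha> \<beta> n :: nat
  assumes "v < n" "v \<notin> {\<alpha>..\<beta> + 1}" "\<alpha> < \<beta>" "2 * \<beta> + 1 \<le> n"
  obtains V where "int \<beta> + 2 \<le> V" "V < int \<alpha> + int n" "vtx n V = v"
proof (cases "\<beta> + 2 \<le> v")
  case True
  then show thesis using that[of "int v"] assms by auto
next
  case False
  then have "v < \<alpha>" using assms(2) by auto
  then show thesis using that[of "int v + int n"] assms vtx_add_mult[of n "int v" 1] by auto
qed

lemma mod_diff_vtx:
  assumes "i < n"
  shows "int ((vtx n V + n - i) mod n) = (V - int i) mod int n"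
proof -
  have "int ((vtx n V + n - i) mod n) = (V mod int n + int n - int i) mod int n"
    using assms int_vtx[of n V] by (simp add: zmod_int of_nat_diff)
  also have "\<dots> = (V mod int n - int i) mod int n"
    by (metis add.commute add_diff_eq mod_add_self1)
  also have "\<dots> = (V - int i) mod int n" by (simp add: mod_diff_left_eq)
  finally show ?thesis .
qed

lemma cdist_vtx:
  assumes "0 < n"
  shows "int (cdist n (vtx n L) (vtx n J)) = min ((J - L) mod int n) (int n - (J - L) mod int n)"
proof -
  define l j where "l = vtx n L" and "j = vtx n J"
  have "l < n" "j < n" unfolding l_def j_def using vtx_less[OF assms] by auto
  have "(J - L) mod int n = (int j - int l) mod int n"
    unfolding l_def j_def using int_vtx[OF assms] by (simp add: mod_diff_eq)
  moreover have "(int j - int l) mod int n = (if l \<le> j then int j - int l else int j - int l + int n)"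
  proof (cases "l \<le> j")
    case False
    have "(int j - int l) mod int n = (int j - int l + int n) mod int n" by simp
    also have "\<dots> = int j - int l + int n" using False \<open>l < n\<close> by (intro mod_pos_pos_trivial) auto
    finally show ?thesis using False by simp
  qed (use \<open>j < n\<close> in auto)
  ultimately show ?thesis
    unfolding l_def[symmetric] j_def[symmetric] cdist_def Let_def
    using \<open>l < n\<close> \<open>j < n\<close> by (auto simp: min_def of_nat_diff)
qed

lemma lifts_in_cyclic_order:
  fixes i k n :: nat and L J :: int
  assumes "i < k" "k < n" "int k < L" "L < J" "J < int i + int n"
  shows "\<not> crosses i (vtx n J) k (vtx n L) \<and> 0 < (k + n - i) mod n \<and>
    (k + n - i) mod n < (vtx n L + n - i) mod n \<and> (vtx n L + n - i) mod n < (vtx n J + n - i) mod n"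
proof -
  have window: "v \<in> {int i..<int i + int n}" if "v \<in> {int i, J, int k, L}" for v
    using that assms by auto
  have "\<not> icrosses (int i) J (int k) L" unfolding icrosses_def ibetween_def using assms by auto
  then have "\<not> crosses i (vtx n J) k (vtx n L)"
    using crosses_vtx_window[of n "int i" "int i" J "int k" L] window assms by simp
  moreover have "(k + n - i) mod n = k - i" using assms(1,2)
    by (metis add.commute add_diff_assoc le_less mod_add_self2 mod_less less_imp_diff_less)
  moreover have "int ((vtx n L + n - i) mod n) = L - int i" "int ((vtx n J + n - i) mod n) = J - int i"
    using mod_diff_vtx[of i n] assms by auto
  ultimately show ?thesis using assms by auto
qed

theorem proposition5:
  fixes m n \<alpha> \<beta> i j k l :: nat and B :: "nat set set"
  assumes "m \<ge> 2" and "n = 2 * m - 1"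
    and "is_blocker n B"
    and "card B = m"
    and "\<forall>t<m. \<exists>!e. e \<in> B \<and> edir n e = (2 * t + 1) mod n"
    and "\<alpha> < m" and "{\<alpha>, \<alpha> + 1} \<in> B" and "\<forall>t<\<alpha>. {t, t + 1} \<notin> B"
    and "\<beta> < m" and "{\<beta>, \<beta> + 1} \<in> B" and "\<forall>t. \<beta> < t \<and> t < m \<longrightarrow> {t, t + 1} \<notin> B"
    and "{i, j} \<in> B" and "{k, l} \<in> B"
    and "\<alpha> < i" and "i < k" and "k < \<beta> + 1"
    and "j \<notin> {\<alpha>..\<beta> + 1}" and "l \<notin> {\<alpha>..\<beta> + 1}"
  shows "(\<not> crosses i j k l \<and>
          0 < (k + n - i) mod n \<and> (k + n - i) mod n < (l + n - i) mod n \<and>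
          (l + n - i) mod n < (j + n - i) mod n)
       \<and> k - i < cdist n l j"
proof -
  have "\<alpha> < \<beta>" using assms(14-16) by simp
  then interpret boundary_parallel_blocker m n \<alpha> \<beta> B
    using assms(1-11) by unfold_locales
  have "i < n" "j < n" "k < n" "l < n" using B_edge assms(12,13) by auto
  obtain J where J: "int \<beta> + 2 \<le> J" "J < int \<alpha> + int n" "vtx n J = j"
    using vtx_lift_outside[OF \<open>j < n\<close> assms(17) \<open>\<alpha> < \<beta>\<close>] last_edge_room by auto
  obtain L where L: "int \<beta> + 2 \<le> L" "L < int \<alpha> + int n" "vtx n L = l"
    using vtx_lift_outside[OF \<open>l < n\<close> assms(18) \<open>\<alpha> < \<beta>\<close>] last_edge_room by auto
  have order: "int k + L < int i + J"
    using lift_sum_decreasing[of "int i" J "int k" L] assms(12-16) J L \<open>i < n\<close> \<open>k < n\<close> by simp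
  then have "(J - L) mod int n = J - L"
    using J L assms(15) \<open>\<alpha> < \<beta>\<close> by (intro mod_pos_pos_trivial) auto
  then have "int (cdist n l j) = min (J - L) (int n - (J - L))"
    using cdist_vtx[OF n_pos, of L J] J L by simp
  with order show ?thesis
    using lifts_in_cyclic_order[of i k n L J] J L assms(14-16) \<open>k < n\<close> by auto
qed

end
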